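(* Let $\beta,p,q>0$ with $\beta p>1$, let $F$ be the CDF of the Singh-Maddala distribution $GBP(1,\beta,p,q)$, and let $y>0$. Then $$\mathrm{CRPS}(F\mid y) = q\,\frac{\Gamma\!\left(2\beta-\frac1p\right)\Gamma\!\left(1+\frac1p\right)}{\Gamma(2\beta)} + y\left(1-\frac{2q^{\beta p}}{(q^p+y^p)^{\beta}}\;{}_2F_1\!\left(1,\beta;1+\tfrac1p;\frac{y^p}{y^p+q^p}\right)\right).$$
   Context: The generalized Beta-prime distribution $GBP(\alpha,\beta,p,q)$ with parameters $\alpha,\beta,p,q>0$ is the distribution on $(0,\infty)$ with density $p_Z(z)=\frac{p}{qB(\alpha,\beta)}\frac{(z/q)^{\alpha p-1}}{(1+(z/q)^p)^{\alpha+\beta}}$ for $z>0$; the Singh-Maddala distribution is the case $\alpha=1$. For a CDF $F$ and observation $y\in\mathbb R$, $\mathrm{CRPS}(F\mid y)=\int_{\mathbb R}(F(x)-H(x-y))^2\,dx$ with $H$ the Heaviside step function. ${}_2F_1$ is the Gauss hypergeometric function. *)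

theory Defs
  imports "HOL-Analysis.Analysis"
begin

definition gbp_pdf :: "real \<Rightarrow> real \<Rightarrow> real \<Rightarrow> real \<Rightarrow> real \<Rightarrow> real" where
  "gbp_pdf \<alpha> \<beta> p q z =
     (if z > 0 then p / (q * Beta \<alpha> \<beta>) * (z / q) powr (\<alpha> * p - 1)
                    / (1 + (z / q) powr p) powr (\<alpha> + \<beta>)
      else 0)"

definition gbp_cdf :: "real \<Rightarrow> real \<Rightarrow> real \<Rightarrow> real \<Rightarrow> real \<Rightarrow> real" where
  "gbp_cdf \<alpha> \<beta> p q x = (LINT t:{..x}|lborel. gbp_pdf \<alpha> \<beta> p q t)"

definition heaviside :: "real \<Rightarrow> real" where
  "heaviside x = (if x \<ge> 0 then 1 else 0)"

definition crps_integrand :: "(real \<Rightarrow> real) \<Rightarrow> real \<Rightarrow> real \<Rightarrow> real" where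
  "crps_integrand F y x = (F x - heaviside (x - y))\<^sup>2"

definition CRPS :: "(real \<Rightarrow> real) \<Rightarrow> real \<Rightarrow> real" where
  "CRPS F y = (LINT x|lborel. crps_integrand F y x)"

text \<open>Gauss hypergeometric function as its power series (used for |z| < 1).\<close>
definition hyp2F1 :: "real \<Rightarrow> real \<Rightarrow> real \<Rightarrow> real \<Rightarrow> real" where
  "hyp2F1 a b c z = (\<Sum>n. pochhammer a n * pochhammer b n / (pochhammer c n * fact n) * z ^ n)"

end

theory Submission
  imports Defs "HOL-Real_Asymp.Real_Asymp"
begin

(* On (0, inf) the Singh-Maddala CDF is F = 1 - S with survival function
   S(x) = (1 + (x/q)^p)^(-beta) = (1 - z(x))^beta, where z(x) = (x/q)^p / (1 + (x/q)^p) is the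
   log-logistic CDF; F vanishes on (-inf, 0].  Hence
   (F(x) - H(x - y))^2 = 1_(0,y)(x) (1 - 2 S(x)) + 1_(0,inf)(x) S(x)^2, so that
   CRPS(F | y) = y - 2 int_0^y S + int_0^inf S^2.
   As S^2 is the survival function for the parameter 2 beta, the last integral is a Singh-Maddala
   mean, which the substitution x = z^-1(t) turns into (q/p) B(1/p, 2 beta - 1/p).
   For the middle integral, x S(x) 2F1(1, beta; 1 + 1/p; z(x)) is an antiderivative of S: its
   derivative collapses to S because h = 2F1(1, beta; c; .) solves the hypergeometric equation
   w (1 - w) h'(w) + (c - 1 - beta w) h(w) = c - 1. *)

definition hyp2F1_1_coeff :: "real \<Rightarrow> real \<Rightarrow> nat \<Rightarrow> real" where
  "hyp2F1_1_coeff b c n = pochhammer b n / pochhammer c n"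

lemma hyp2F1_1_coeff_pos: "b > 0 \<Longrightarrow> c > 0 \<Longrightarrow> hyp2F1_1_coeff b c n > 0"
  unfolding hyp2F1_1_coeff_def by (intro divide_pos_pos pochhammer_pos)

lemma hyp2F1_1_coeff_Suc:
  "c > 0 \<Longrightarrow> hyp2F1_1_coeff b c (Suc n) = hyp2F1_1_coeff b c n * (b + n) / (c + n)"
  unfolding hyp2F1_1_coeff_def pochhammer_Suc by simp

lemma hyp2F1_1_eq_suminf: "hyp2F1 1 b c z = (\<Sum>n. hyp2F1_1_coeff b c n * z ^ n)"
  unfolding hyp2F1_def hyp2F1_1_coeff_def by (simp add: pochhammer_fact[symmetric])

lemma conv_radius_hyp2F1_1_coeff:
  assumes "b > 0" "c > 0"
  shows "conv_radius (hyp2F1_1_coeff b c) = 1"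
proof (rule conv_radius_ratio_limit_nonzero[of _ 1])
  let ?h = "hyp2F1_1_coeff b c"
  have "norm (?h n) / norm (?h (Suc n)) = (c + n) / (b + n)" for n
    using hyp2F1_1_coeff_pos[OF assms, of n] assms
    by (simp add: hyp2F1_1_coeff_Suc divide_simps)
  moreover have "(\<lambda>n. (c + real n) / (b + real n)) \<longlonglongrightarrow> 1" by real_asymp
  ultimately show "(\<lambda>n. norm (?h n) / norm (?h (Suc n))) \<longlonglongrightarrow> 1" by simp
qed auto

lemma has_field_derivative_hyp2F1_1:
  assumes "b > 0" "c > 0" "\<bar>z\<bar> < 1"
  shows "(hyp2F1 1 b c has_field_derivative (\<Sum>n. diffs (hyp2F1_1_coeff b c) n * z ^ n)) (at z)"
  unfolding hyp2F1_1_eq_suminf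
  by (rule has_field_derivative_powser)
     (use assms conv_radius_hyp2F1_1_coeff[OF assms(1,2)] in simp)

lemma hyp2F1_1_DERIV:
  assumes "b > 0" "c > 0" "\<bar>z\<bar> < 1"
  shows "DERIV (hyp2F1 1 b c) z :> deriv (hyp2F1 1 b c) z"
  using has_field_derivative_hyp2F1_1[OF assms] DERIV_imp_deriv by metis

lemma hyp2F1_1_ode:
  assumes "b > 0" "c > 0" "\<bar>z\<bar> < 1"
  shows "z * (1 - z) * deriv (hyp2F1 1 b c) z + (c - 1 - b * z) * hyp2F1 1 b c z = c - 1"
proof -
  define h where "h = hyp2F1_1_coeff b c"
  define H where "H = hyp2F1 1 b c z"
  define D where "D = deriv (hyp2F1 1 b c) z"
  have summ: "summable (\<lambda>n. h n * w ^ n)" if "norm w < 1" for w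
    using that conv_radius_hyp2F1_1_coeff[OF assms(1,2)]
    by (intro summable_in_conv_radius) (simp add: h_def)
  have H: "(\<lambda>n. h n * z ^ n) sums H"
    unfolding H_def h_def hyp2F1_1_eq_suminf using summ assms(3) by (simp add: h_def summable_sums)
  have "D = (\<Sum>n. diffs h n * z ^ n)"
    unfolding D_def h_def using has_field_derivative_hyp2F1_1[OF assms] by (rule DERIV_imp_deriv)
  with termdiff_converges[of z 1 h] summ assms(3)
  have D: "(\<lambda>n. diffs h n * z ^ n) sums D" by (simp add: summable_sums)
  have "(\<lambda>n. z * (diffs h n * z ^ n)) sums (z * D)" by (rule sums_mult[OF D])
  hence "(\<lambda>n. real (Suc n) * h (Suc n) * z ^ Suc n) sums (z * D)"
    by (simp add: diffs_def mult_ac)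
  hence zD: "(\<lambda>n. real n * h n * z ^ n) sums (z * D)"
    using sums_Suc_iff[of "\<lambda>n. real n * h n * z ^ n" "z * D"] by simp
  define T where "T n = (real n + c - 1) * h n * z ^ n" for n
  have T: "T sums (z * D + (c - 1) * H)"
    unfolding T_def using sums_add[OF zD sums_mult[OF H, of "c - 1"]]
    by (simp add: algebra_simps)
  have T_Suc: "T (Suc n) = z * (real n * h n * z ^ n + b * (h n * z ^ n))" for n
  proof -
    have "(real (Suc n) + c - 1) * h (Suc n) = (b + n) * h n"
      using assms(2) by (simp add: h_def hyp2F1_1_coeff_Suc field_simps)
    thus ?thesis unfolding T_def by (simp add: algebra_simps)
  qed
  have "(\<lambda>n. T (Suc n)) sums (z * (z * D + b * H))"
    unfolding T_Suc by (intro sums_mult sums_add zD sums_mult[OF H])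
  hence "T sums (z * (z * D + b * H) + T 0)" by (simp add: sums_Suc_iff)
  with T have "z * D + (c - 1) * H = z * (z * D + b * H) + T 0" by (rule sums_unique2)
  moreover have "T 0 = c - 1" by (simp add: T_def h_def hyp2F1_1_coeff_def)
  ultimately show ?thesis unfolding H_def D_def by (simp add: algebra_simps)
qed

definition loglogistic_cdf :: "real \<Rightarrow> real \<Rightarrow> real \<Rightarrow> real" where
  "loglogistic_cdf p q x = (x / q) powr p / (1 + (x / q) powr p)"

definition sm_survival :: "real \<Rightarrow> real \<Rightarrow> real \<Rightarrow> real \<Rightarrow> real" where
  "sm_survival b p q x = (1 + (x / q) powr p) powr (- b)"

lemma one_minus_loglogistic_cdf: "1 - loglogistic_cdf p q x = 1 / (1 + (x / q) powr p)"
proof -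
  have "1 + (x / q) powr p > 0" by (simp add: add_pos_nonneg)
  thus ?thesis unfolding loglogistic_cdf_def by (simp add: field_simps)
qed

lemma loglogistic_cdf_bounds: "0 \<le> loglogistic_cdf p q x" "loglogistic_cdf p q x < 1"
  using one_minus_loglogistic_cdf[of p q x]
  by (auto simp: loglogistic_cdf_def add_pos_nonneg)

lemma sm_survival_loglogistic: "sm_survival b p q x = (1 - loglogistic_cdf p q x) powr b"
proof -
  have "1 + (x / q) powr p > 0" by (simp add: add_pos_nonneg)
  thus ?thesis
    unfolding sm_survival_def one_minus_loglogistic_cdf by (simp add: powr_minus_divide powr_divide)
qed

lemma sm_survival_pos: "sm_survival b p q x > 0"
  unfolding sm_survival_loglogistic using loglogistic_cdf_bounds(2)[of p q x] by simp

lemma loglogistic_cdf_DERIV: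
  fixes p :: real
  assumes "x > 0" "q > 0"
  defines "z \<equiv> loglogistic_cdf p q x"
  shows "DERIV (loglogistic_cdf p q) x :> p * z * (1 - z) / x"
proof -
  let ?u = "(x / q) powr p"
  have u': "(x / q) powr (p - 1) = ?u * q / x"
    using assms by (simp add: powr_diff)
  have "1 + ?u > 0" by (simp add: add_pos_nonneg)
  thus ?thesis
    unfolding z_def one_minus_loglogistic_cdf using assms
    unfolding loglogistic_cdf_def
    by (auto intro!: derivative_eq_intros simp: u' field_simps power2_eq_square)
qed

lemma sm_survival_DERIV:
  fixes b p :: real
  assumes "x > 0" "q > 0"
  defines "z \<equiv> loglogistic_cdf p q x"
  shows "DERIV (sm_survival b p q) x :> - b * p * z * sm_survival b p q x / x"
proof -
  have z: "1 - z > 0" using loglogistic_cdf_bounds(2) by (simp add: z_def)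
  have "DERIV (\<lambda>x. (1 - loglogistic_cdf p q x) powr b) x
          :> b * (1 - z) powr (b - 1) * - (p * z * (1 - z) / x)"
    using z unfolding z_def by (auto intro!: derivative_eq_intros loglogistic_cdf_DERIV assms)
  moreover have "b * (1 - z) powr (b - 1) * - (p * z * (1 - z) / x)
                   = - b * p * z * (1 - z) powr b / x"
    using z by (simp add: powr_diff)
  ultimately show ?thesis
    unfolding sm_survival_loglogistic[abs_def] z_def[symmetric] by (rule DERIV_cong)
qed

lemma isCont_loglogistic_cdf: "x > 0 \<Longrightarrow> q > 0 \<Longrightarrow> isCont (loglogistic_cdf p q) x"
  using loglogistic_cdf_DERIV DERIV_isCont by blast

lemma isCont_sm_survival: "x > 0 \<Longrightarrow> q > 0 \<Longrightarrow> isCont (sm_survival b p q) x"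
  using sm_survival_DERIV DERIV_isCont by blast

lemma loglogistic_cdf_tendsto_0:
  fixes p q :: real
  assumes "p > 0" "q > 0"
  shows "(loglogistic_cdf p q \<longlongrightarrow> 0) (at_right 0)"
  unfolding loglogistic_cdf_def using assms by real_asymp

lemma sm_survival_tendsto_1:
  fixes b p q :: real
  assumes "p > 0" "q > 0"
  shows "(sm_survival b p q \<longlongrightarrow> 1) (at_right 0)"
  unfolding sm_survival_def using assms by real_asymp

lemma gbp_pdf_singh_maddala:
  fixes b p q :: real
  assumes "b > 0" "q > 0" "x > 0"
  shows "gbp_pdf 1 b p q x = b * p * loglogistic_cdf p q x * sm_survival b p q x / x"
proof -
  let ?u = "(x / q) powr p"
  have u: "1 + ?u > 0" by (simp add: add_pos_nonneg)
  have "b \<notin> \<int>\<^sub>\<le>\<^sub>0" using assms(1) nonpos_Ints_nonpos by force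
  hence beta: "Beta 1 b = 1 / b"
    using Gamma_plus1[of b] Gamma_real_pos[OF assms(1)] by (simp add: Beta_def add.commute)
  have u': "(x / q) powr (1 * p - 1) = ?u * q / x"
    using assms by (simp add: powr_diff)
  have "(1 + ?u) powr (1 + b) = (1 + ?u) * (1 + ?u) powr b"
    using u by (simp add: powr_add)
  then show ?thesis
    using assms u unfolding gbp_pdf_def loglogistic_cdf_def sm_survival_def beta u'
    by (simp add: powr_minus field_simps)
qed

lemma gbp_cdf_nonpos: "x \<le> 0 \<Longrightarrow> gbp_cdf a b p q x = 0"
proof -
  assume "x \<le> 0"
  hence "(\<lambda>t. indicator {..x} t *\<^sub>R gbp_pdf a b p q t) = (\<lambda>t. 0)"
    by (auto simp: indicator_def gbp_pdf_def)
  thus ?thesis unfolding gbp_cdf_def set_lebesgue_integral_def by simp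
qed

lemma gbp_cdf_singh_maddala:
  fixes b p q x :: real
  assumes b: "b > 0" and p: "p > 0" and q: "q > 0" and x: "x > 0"
  shows "gbp_cdf 1 b p q x = 1 - sm_survival b p q x"
proof -
  let ?f = "gbp_pdf 1 b p q"
  let ?g = "\<lambda>t. b * p * loglogistic_cdf p q t * sm_survival b p q t / t"
  have pdf: "?f t = ?g t" if "t > 0" for t
    using gbp_pdf_singh_maddala[OF b q that] .
  have deriv: "DERIV (\<lambda>t. - sm_survival b p q t) t :> ?f t" if "0 < ereal t" "ereal t < ereal x" for t
    using that DERIV_minus[OF sm_survival_DERIV[of t q b p]] q by (simp add: pdf)
  have cont: "isCont ?f t" if "0 < ereal t" "ereal t < ereal x" for t
  proof -
    have t: "t > 0" using that by simp
    have "\<forall>\<^sub>F s in nhds t. ?f s = ?g s"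
      using eventually_nhds_in_open[of "{0<..}" t] t by (auto elim!: eventually_mono simp: pdf)
    moreover have "isCont ?g t"
      using t q by (intro continuous_intros isCont_loglogistic_cdf isCont_sm_survival) auto
    ultimately show ?thesis by (simp add: isCont_cong)
  qed
  have nonneg: "AE t in lborel. 0 < ereal t \<longrightarrow> ereal t < ereal x \<longrightarrow> 0 \<le> ?f t"
    using b p loglogistic_cdf_bounds(1) sm_survival_pos by (auto simp: pdf less_imp_le)
  have lim0: "(((\<lambda>t. - sm_survival b p q t) \<circ> real_of_ereal) \<longlongrightarrow> -1) (at_right 0)"
    unfolding zero_ereal_def ereal_tendsto_simps
    using tendsto_minus[OF sm_survival_tendsto_1[OF p q]] by simp
  have limx: "(((\<lambda>t. - sm_survival b p q t) \<circ> real_of_ereal) \<longlongrightarrow> - sm_survival b p q x)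
                    (at_left (ereal x))"
    unfolding ereal_tendsto_simps using isCont_sm_survival[OF x q]
    by (intro tendsto_minus) (simp add: isCont_def filterlim_at_split)
  have "(LBINT t=0..x. ?f t) = - sm_survival b p q x - (-1)"
    by (rule interval_integral_FTC_nonneg(2)[OF _ deriv cont nonneg lim0 limx]) (use x in simp)
  moreover have "gbp_cdf 1 b p q x = (LBINT t:{0<..x}. ?f t)"
    unfolding gbp_cdf_def set_lebesgue_integral_def
    by (rule Bochner_Integration.integral_cong) (auto simp: indicator_def gbp_pdf_def)
  ultimately show ?thesis
    using interval_integral_Ioc[of 0 x ?f] x by (simp add: zero_ereal_def)
qed

lemma sm_survival_antiderivative:
  fixes b p q x :: real
  assumes b: "b > 0" and p: "p > 0" and q: "q > 0" and x: "x > 0"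
  shows "DERIV (\<lambda>x. x * sm_survival b p q x * hyp2F1 1 b (1 + 1/p) (loglogistic_cdf p q x)) x
           :> sm_survival b p q x"
proof -
  define z where "z = loglogistic_cdf p q x"
  define S where "S = sm_survival b p q x"
  define H where "H = hyp2F1 1 b (1 + 1/p) z"
  define D where "D = deriv (hyp2F1 1 b (1 + 1/p)) z"
  have c: "1 + 1/p > 0" using p by (simp add: add_pos_pos)
  have z: "\<bar>z\<bar> < 1" using loglogistic_cdf_bounds[of p q x] by (simp add: z_def)
  have deriv: "DERIV (\<lambda>x. x * sm_survival b p q x * hyp2F1 1 b (1 + 1/p) (loglogistic_cdf p q x)) x
                 :> (1 * S + (- b * p * z * S / x) * x) * H + (D * (p * z * (1 - z) / x)) * (x * S)"
    unfolding z_def S_def H_def D_def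
    by (intro DERIV_mult DERIV_ident sm_survival_DERIV x q
          DERIV_chain2[OF hyp2F1_1_DERIV[OF b c] loglogistic_cdf_DERIV]) (use z z_def in simp)
  have ode: "p * (z * (1 - z) * D) = 1 - H + b * p * z * H"
    using hyp2F1_1_ode[OF b c z] p unfolding H_def D_def by (simp add: field_simps)
  have "(1 * S + (- b * p * z * S / x) * x) * H + (D * (p * z * (1 - z) / x)) * (x * S)
          = S * (H - b * p * z * H + p * (z * (1 - z) * D))"
    using x by (simp add: field_simps)
  also have "\<dots> = S" unfolding ode by simp
  finally show ?thesis using deriv unfolding S_def by simp
qed

lemma set_integral_sm_survival_Ioo:
  fixes b p q y :: real
  assumes b: "b > 0" and p: "p > 0" and q: "q > 0" and y: "y > 0"
  shows "set_integrable lborel {0<..<y} (sm_survival b p q)"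
    and "(LINT x:{0<..<y}|lborel. sm_survival b p q x)
           = y * sm_survival b p q y * hyp2F1 1 b (1 + 1/p) (loglogistic_cdf p q y)"
proof -
  let ?H = "hyp2F1 1 b (1 + 1/p)"
  let ?G = "\<lambda>x. x * sm_survival b p q x * ?H (loglogistic_cdf p q x)"
  have c: "1 + 1/p > 0" using p by (simp add: add_pos_pos)
  have deriv: "DERIV ?G x :> sm_survival b p q x" if "0 < ereal x" "ereal x < ereal y" for x
    using sm_survival_antiderivative[OF b p q] that by simp
  have cont: "isCont (sm_survival b p q) x" if "0 < ereal x" "ereal x < ereal y" for x
    using isCont_sm_survival[OF _ q] that by simp
  have nonneg: "AE x in lborel. 0 < ereal x \<longrightarrow> ereal x < ereal y \<longrightarrow> 0 \<le> sm_survival b p q x"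
    using sm_survival_pos less_imp_le by blast
  have "isCont ?H 0" using hyp2F1_1_DERIV[OF b c, of 0] DERIV_isCont by simp
  hence "(?G \<longlongrightarrow> 0 * 1 * ?H 0) (at_right 0)"
    by (intro tendsto_mult tendsto_ident_at sm_survival_tendsto_1 p q
          isCont_tendsto_compose[of 0 ?H] loglogistic_cdf_tendsto_0)
  hence lim0: "((?G \<circ> real_of_ereal) \<longlongrightarrow> 0) (at_right 0)"
    unfolding zero_ereal_def ereal_tendsto_simps by simp
  have "isCont ?G y"
    using sm_survival_antiderivative[OF b p q y] DERIV_isCont by blast
  hence limy: "((?G \<circ> real_of_ereal) \<longlongrightarrow> ?G y) (at_left (ereal y))"
    unfolding ereal_tendsto_simps by (simp add: isCont_def filterlim_at_split)
  note FTC = interval_integral_FTC_nonneg[OF _ deriv cont nonneg lim0 limy]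
  have "0 < ereal y" using y by simp
  from FTC(1)[OF this] show "set_integrable lborel {0<..<y} (sm_survival b p q)"
    by (simp add: zero_ereal_def)
  from FTC(2)[OF \<open>0 < ereal y\<close>] show "(LINT x:{0<..<y}|lborel. sm_survival b p q x) = ?G y"
    using y by (simp add: interval_lebesgue_integral_def zero_ereal_def)
qed

definition loglogistic_quantile :: "real \<Rightarrow> real \<Rightarrow> real \<Rightarrow> real" where
  "loglogistic_quantile p q t = q * (t / (1 - t)) powr (1 / p)"

lemma loglogistic_cdf_quantile:
  fixes p q t :: real
  assumes "p > 0" "q > 0" "0 < t" "t < 1"
  shows "loglogistic_cdf p q (loglogistic_quantile p q t) = t"
proof -
  have "(loglogistic_quantile p q t / q) powr p = t / (1 - t)"
    using assms by (simp add: loglogistic_quantile_def powr_powr)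
  thus ?thesis using assms unfolding loglogistic_cdf_def by (simp only:) (simp add: field_simps)
qed

lemma loglogistic_quantile_DERIV:
  fixes p q t :: real
  assumes "p > 0" "0 < t" "t < 1"
  shows "DERIV (loglogistic_quantile p q) t :> loglogistic_quantile p q t / (p * t * (1 - t))"
proof -
  have "DERIV (\<lambda>t. t / (1 - t)) t :> 1 / (1 - t)\<^sup>2"
    using assms by (auto intro!: derivative_eq_intros simp: field_simps power2_eq_square)
  hence deriv: "DERIV (loglogistic_quantile p q) t
                  :> q * (1 / p * (t / (1 - t)) powr (1 / p - of_nat 1) * (1 / (1 - t)\<^sup>2))"
    unfolding loglogistic_quantile_def[abs_def] using assms by (intro DERIV_cmult DERIV_fun_powr) auto
  have "(t / (1 - t)) powr (1 / p - of_nat 1) = (t / (1 - t)) powr (1 / p) * (1 - t) / t"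
    using assms by (simp add: powr_diff)
  hence "q * (1 / p * (t / (1 - t)) powr (1 / p - of_nat 1) * (1 / (1 - t)\<^sup>2))
           = loglogistic_quantile p q t / (p * t * (1 - t))"
    unfolding loglogistic_quantile_def using assms
    by (simp only:) (simp add: field_simps, simp add: algebra_simps power2_eq_square)
  with deriv show ?thesis by (rule DERIV_cong)
qed

lemma loglogistic_quantile_tendsto_0:
  fixes p q :: real
  assumes "p > 0" "q > 0"
  shows "(loglogistic_quantile p q \<longlongrightarrow> 0) (at_right 0)"
  unfolding loglogistic_quantile_def[abs_def] using assms by real_asymp

lemma filterlim_loglogistic_quantile_at_top:
  fixes p q :: real
  assumes "p > 0" "q > 0"
  shows "filterlim (loglogistic_quantile p q) at_top (at_left 1)"
  unfolding loglogistic_quantile_def[abs_def] using assms by real_asymp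

lemma sm_survival_quantile_substitution:
  fixes b p q t :: real
  assumes p: "p > 0" and q: "q > 0" and t: "0 < t" "t < 1"
  shows "sm_survival b p q (loglogistic_quantile p q t)
           * (loglogistic_quantile p q t / (p * t * (1 - t)))
         = q / p * (t powr (1/p - 1) * (1 - t) powr (b - 1/p - 1))"
proof -
  have S: "sm_survival b p q (loglogistic_quantile p q t) = (1 - t) powr b"
    using assms by (simp add: sm_survival_loglogistic loglogistic_cdf_quantile)
  have Q: "loglogistic_quantile p q t = q * t powr (1/p) / (1 - t) powr (1/p)"
    using t by (simp add: loglogistic_quantile_def powr_divide)
  have powrs: "t powr (1/p - 1) = t powr (1/p) / t"
    "(1 - t) powr (b - 1/p - 1) = (1 - t) powr b / ((1 - t) powr (1/p) * (1 - t))"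
    using t by (simp_all add: powr_diff)
  show ?thesis
    using t p unfolding S unfolding Q powrs by (simp add: field_simps)
qed

lemma interval_integral_Beta:
  fixes a b :: real
  assumes "a > 0" "b > 0"
  shows "set_integrable lborel (einterval 0 1) (\<lambda>t. t powr (a - 1) * (1 - t) powr (b - 1))"
    and "(LBINT t=0..1. t powr (a - 1) * (1 - t) powr (b - 1)) = Beta a b"
proof -
  let ?B = "\<lambda>t. t powr (a - 1) * (1 - t) powr (b - 1)"
  have int_B: "set_integrable lborel {0..1} ?B" by (rule integrable_Beta[OF assms])
  have "einterval 0 1 = {0<..<(1::real)}" by (auto simp: einterval_def)
  thus "set_integrable lborel (einterval 0 1) ?B"
    by (auto intro: set_integrable_subset[OF int_B])
  have "(LBINT t=0..1. ?B t) = integral {0..1} ?B"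
    using interval_integral_Icc[of 0 1 ?B] set_borel_integral_eq_integral(2)[OF int_B]
    by (simp add: zero_ereal_def one_ereal_def)
  also have "\<dots> = Beta a b"
    using has_integral_Beta_real[OF assms] by (rule integral_unique)
  finally show "(LBINT t=0..1. ?B t) = Beta a b" .
qed

lemma mult_Beta_left: "(a :: real) > 0 \<Longrightarrow> a * Beta a b = Gamma (1 + a) * Gamma b / Gamma (a + b)"
  using Gamma_plus1[of a] nonpos_Ints_nonpos[of a] by (force simp: Beta_def add.commute)

lemma set_integral_sm_survival_Ioi:
  fixes b p q :: real
  assumes b: "b > 0" and p: "p > 0" and q: "q > 0" and bp: "b * p > 1"
  shows "set_integrable lborel {0<..} (sm_survival b p q)"
    and "(LINT x:{0<..}|lborel. sm_survival b p q x)
           = q * Gamma (b - 1/p) * Gamma (1 + 1/p) / Gamma b"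
proof -
  define g where "g = loglogistic_quantile p q"
  define g' where "g' t = g t / (p * t * (1 - t))" for t
  define B where "B t = t powr (1/p - 1) * (1 - t) powr (b - 1/p - 1)" for t :: real
  have a1: "1/p > 0" using p by simp
  have a2: "b - 1/p > 0" using bp p by (simp add: field_simps)
  have e01: "einterval 0 1 = {0<..<(1::real)}" by (auto simp: einterval_def)
  have subst: "sm_survival b p q (g t) * g' t = q / p * B t" if "t \<in> einterval 0 1" for t
    using that sm_survival_quantile_substitution[OF p q] by (simp add: e01 g_def g'_def B_def)
  note Beta = interval_integral_Beta[OF a1 a2, folded B_def]
  have "set_integrable lborel (einterval 0 1) (\<lambda>t. q / p * B t)"
    using Beta(1) by (rule set_integrable_mult_right)
  hence int_subst: "set_integrable lborel (einterval 0 1) (\<lambda>t. sm_survival b p q (g t) * g' t)"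
    by (subst set_integrable_cong[OF refl refl subst])
  have deriv: "DERIV g t :> g' t" if "0 < ereal t" "ereal t < 1" for t
    using that loglogistic_quantile_DERIV[OF p] unfolding g_def g'_def by simp
  have cont_f: "isCont (sm_survival b p q) (g t)" if "0 < ereal t" "ereal t < 1" for t
    using that q by (intro isCont_sm_survival) (simp add: g_def loglogistic_quantile_def)
  have cont_g': "isCont g' t" if "0 < ereal t" "ereal t < 1" for t
    using that p unfolding g'_def g_def loglogistic_quantile_def by (intro continuous_intros) auto
  have g'_nonneg: "g' t \<ge> 0" if "0 \<le> ereal t" "ereal t \<le> 1" for t
    using that p q unfolding g'_def g_def loglogistic_quantile_def by (intro divide_nonneg_nonneg) auto
  have lim0: "((ereal \<circ> g \<circ> real_of_ereal) \<longlongrightarrow> 0) (at_right 0)"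
    unfolding zero_ereal_def ereal_tendsto_simps g_def
    using loglogistic_quantile_tendsto_0[OF p q] by simp
  have lim1: "((ereal \<circ> g \<circ> real_of_ereal) \<longlongrightarrow> \<infinity>) (at_left 1)"
    unfolding one_ereal_def ereal_tendsto_simps g_def
    using filterlim_loglogistic_quantile_at_top[OF p q] by simp
  note substitution = interval_integral_substitution_nonneg[OF _ deriv cont_f cont_g'
      less_imp_le[OF sm_survival_pos] g'_nonneg lim0 lim1 int_subst]
  show "set_integrable lborel {0<..} (sm_survival b p q)"
    using substitution(1) by (simp add: zero_ereal_def)
  have "(LBINT t=0..1. sm_survival b p q (g t) * g' t) = q / p * (LBINT t=0..1. B t)"
    using interval_integral_cong[of 0 1 "\<lambda>t. sm_survival b p q (g t) * g' t" "\<lambda>t. q / p * B t"]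
      subst
    by simp
  also have "(LBINT t=0..1. B t) = Beta (1/p) (b - 1/p)" by (rule Beta(2))
  also have "q / p * Beta (1/p) (b - 1/p) = q * Gamma (b - 1/p) * Gamma (1 + 1/p) / Gamma b"
    using arg_cong[OF mult_Beta_left[OF a1, of "b - 1/p"], of "\<lambda>r. q * r"] by (simp add: mult_ac)
  finally show "(LINT x:{0<..}|lborel. sm_survival b p q x)
                  = q * Gamma (b - 1/p) * Gamma (1 + 1/p) / Gamma b"
    using substitution(2) interval_lebesgue_integral_0_infty[of lborel "sm_survival b p q"] by simp
qed

lemma sm_survival_squared: "(sm_survival b p q x)\<^sup>2 = sm_survival (2 * b) p q x"
  unfolding sm_survival_def power2_eq_square by (simp add: powr_add[symmetric])

lemma loglogistic_cdf_altdef: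
  "x > 0 \<Longrightarrow> q > 0 \<Longrightarrow> loglogistic_cdf p q x = x powr p / (x powr p + q powr p)"
  unfolding loglogistic_cdf_def by (simp add: powr_divide field_simps add_pos_pos)

lemma sm_survival_altdef:
  assumes "x > 0" "q > 0"
  shows "sm_survival b p q x = q powr (b * p) / (q powr p + x powr p) powr b"
proof -
  have "1 + (x / q) powr p = (q powr p + x powr p) / q powr p"
    using assms by (simp add: powr_divide field_simps)
  thus ?thesis
    using assms unfolding sm_survival_def
    by (simp add: powr_minus_divide powr_divide add_pos_pos powr_powr mult.commute)
qed

lemma CRPS_eq_survival_integrals:
  fixes F S :: "real \<Rightarrow> real" and y :: real
  assumes y: "y > 0"
    and F_nonpos: "\<And>x. x \<le> 0 \<Longrightarrow> F x = 0" and F_pos: "\<And>x. x > 0 \<Longrightarrow> F x = 1 - S x"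
    and int_S: "set_integrable lborel {0<..<y} S"
    and int_S2: "set_integrable lborel {0<..} (\<lambda>x. (S x)\<^sup>2)"
  shows "integrable lborel (crps_integrand F y)"
    and "CRPS F y = y - 2 * (LINT x:{0<..<y}|lborel. S x) + (LINT x:{0<..}|lborel. (S x)\<^sup>2)"
proof -
  have split: "crps_integrand F y = (\<lambda>x. indicator {0<..<y} x *\<^sub>R 1
      - 2 * (indicator {0<..<y} x *\<^sub>R S x) + indicator {0<..} x *\<^sub>R (S x)\<^sup>2)"
  proof
    fix x
    show "crps_integrand F y x = indicator {0<..<y} x *\<^sub>R 1
      - 2 * (indicator {0<..<y} x *\<^sub>R S x) + indicator {0<..} x *\<^sub>R (S x)\<^sup>2"
    proof (cases "x > 0")
      case True
      thus ?thesis
        by (simp add: F_pos crps_integrand_def heaviside_def indicator_def power2_eq_square algebra_simps)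
    qed (use y F_nonpos in \<open>simp add: crps_integrand_def heaviside_def indicator_def\<close>)
  qed
  have int_1: "set_integrable lborel {0<..<y} (\<lambda>x. 1 :: real)"
    unfolding set_integrable_def using y by (simp add: integrable_real_indicator)
  show "integrable lborel (crps_integrand F y)"
    unfolding split using int_1 int_S int_S2 unfolding set_integrable_def by auto
  have "CRPS F y = (LINT x:{0<..<y}|lborel. 1) - 2 * (LINT x:{0<..<y}|lborel. S x)
                   + (LINT x:{0<..}|lborel. (S x)\<^sup>2)"
    unfolding CRPS_def split set_lebesgue_integral_def
    using int_1 int_S int_S2 unfolding set_integrable_def by simp
  thus "CRPS F y = y - 2 * (LINT x:{0<..<y}|lborel. S x) + (LINT x:{0<..}|lborel. (S x)\<^sup>2)"
    using y by (simp add: set_lebesgue_integral_def)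
qed

theorem corollary1:
  fixes \<beta> p q y :: real
  assumes "\<beta> > 0" and "p > 0" and "q > 0" and "\<beta> * p > 1" and "y > 0"
  shows "integrable lborel (crps_integrand (gbp_cdf 1 \<beta> p q) y)
    \<and> CRPS (gbp_cdf 1 \<beta> p q) y =
      q * Gamma (2 * \<beta> - 1 / p) * Gamma (1 + 1 / p) / Gamma (2 * \<beta>)
      + y * (1 - 2 * q powr (\<beta> * p) / (q powr p + y powr p) powr \<beta>
               * hyp2F1 1 \<beta> (1 + 1 / p) (y powr p / (y powr p + q powr p)))"
proof -
  note b = assms(1) and p = assms(2) and q = assms(3) and bp = assms(4) and y = assms(5)
  have b2: "2 * \<beta> > 0" "(2 * \<beta>) * p > 1" using b bp by auto
  note mean = set_integral_sm_survival_Ioi[OF b2(1) p q b2(2)]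
  have int_S2: "set_integrable lborel {0<..} (\<lambda>x. (sm_survival \<beta> p q x)\<^sup>2)"
    unfolding sm_survival_squared using mean(1) by simp
  note CRPS = CRPS_eq_survival_integrals[OF y gbp_cdf_nonpos gbp_cdf_singh_maddala[OF b p q]
      set_integral_sm_survival_Ioo(1)[OF b p q y] int_S2]
  show ?thesis
    using CRPS set_integral_sm_survival_Ioo(2)[OF b p q y] mean(2)
    by (simp add: sm_survival_squared sm_survival_altdef loglogistic_cdf_altdef y q algebra_simps)
qed

end
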